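(* For the full-order LQO system $G$ and the reduced-order LQO system $G_k$ described in the context, the squared frequency-limited $\mathcal{H}_2$ norm of the error satisfies $$\|G-G_k\|_{\mathcal{H}_{2,\omega}}^2=\|G\|_{\mathcal{H}_{2,\omega}}^2-2\langle G,G_k\rangle_{\mathcal{H}_{2,\omega}}+\|G_k\|_{\mathcal{H}_{2,\omega}}^2,$$ where the $\mathcal{H}_{2,\omega}$ inner product equals $\langle G,G_k\rangle_{\mathcal{H}_{2,\omega}}=\operatorname{trace}\big(B^T(Y_{12,\omega}+Z_{12,\omega})B_k\big)=\operatorname{trace}(B^TQ_{12,\omega}B_k)$.
   Context: Consider the linear quadratic output (LQO) system $G$: $\dot x(t)=Ax(t)+Bu(t)$, $y(t)=Cx(t)+[x(t)^TM_1x(t);\dots;x(t)^TM_px(t)]$ with $A\in\mathbb{R}^{n\times n}$ Hurwitz, $B\in\mathbb{R}^{n\times m}$, $C\in\mathbb{R}^{p\times n}$, $M_i=M_i^T\in\mathbb{R}^{n\times n}$, and a reduced-order LQO system $G_k$ with realization $(A_k,B_k,C_k,M_{k,1},\dots,M_{k,p})$ of order $k$, $A_k$ Hurwitz. Their transfer functions are $G_1(s)=C(sI-A)^{-1}B$, $G_{2,i}(s_1,s_2)=B^T(s_1I-A)^{-*}M_i(s_2I-A)^{-1}B$, and analogously $G_{k,1}$, $G_{k,2,i}$ with the reduced matrices. The frequency-limited $\mathcal{H}_2$ norm on $[0,\omega]$ rad/sec is given by $\|G\|_{\mathcal{H}_{2,\omega}}^2=\operatorname{trace}\Big(\frac{1}{2\pi}\int_{-\omega}^{\omega}G_1^*(j\nu)G_1(j\nu)d\nu+\frac{1}{(2\pi)^2}\int_{-\omega}^{\omega}\int_{-\omega}^{\omega}\sum_{i=1}^pG_{2,i}^*(j\nu_1,j\nu_2)G_{2,i}(j\nu_1,j\nu_2)d\nu_1d\nu_2\Big)$,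 and the $\mathcal{H}_{2,\omega}$ inner product is $\langle G,G_k\rangle_{\mathcal{H}_{2,\omega}}=\frac{1}{2\pi}\int_{-\omega}^{\omega}\operatorname{trace}\big(G_1^*(j\nu)G_{k,1}(j\nu)\big)d\nu+\frac{1}{4\pi^2}\operatorname{trace}\Big(\int_{-\omega}^{\omega}\int_{-\omega}^{\omega}\sum_{i=1}^pG_{2,i}^*(j\nu_1,j\nu_2)G_{k,2,i}(j\nu_1,j\nu_2)d\nu_1d\nu_2\Big)$. Let $F_\omega=\frac{1}{2\pi}\int_{-\omega}^{\omega}(j\nu I-A)^{-1}d\nu$ and $F_{k,\omega}=\frac{1}{2\pi}\int_{-\omega}^{\omega}(j\nu I-A_k)^{-1}d\nu$. Let $P_{12,\omega}$ solve $AP_{12,\omega}+P_{12,\omega}A_k^T+F_\omega BB_k^T+BB_k^TF_{k,\omega}^*=0$, $Y_{12,\omega}$ solve $A^TY_{12,\omega}+Y_{12,\omega}A_k+F_\omega^*C^TC_k+C^TC_kF_{k,\omega}=0$, $Z_{12,\omega}$ solve $A^TZ_{12,\omega}+Z_{12,\omega}A_k+\sum_{i=1}^p(F_\omega^*M_iP_{12,\omega}M_{k,i}+M_iP_{12,\omega}M_{k,i}F_{k,\omega})=0$, and $Q_{12,\omega}=Y_{12,\omega}+Z_{12,\omega}$. Equivalently $Y_{12,\omega}=\frac{1}{2\pi}\int_{-\omega}^{\omega}(j\nu I-A)^{-*}C^TC_k(j\nu I-A_k)^{-1}d\nu$ and $Z_{12,\omega}$ is the analogous double integral involving $\sum_i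 M_i(\cdot)M_{k,i}$. *)

theory Defs
  imports "HOL-Analysis.Analysis"
begin

definition cmat :: "real^'c^'r \<Rightarrow> complex^'c^'r" where
  "cmat X = map_matrix complex_of_real X"

definition ctrans :: "complex^'c^'r \<Rightarrow> complex^'r^'c" where
  "ctrans X = transpose (map_matrix cnj X)"

definition hurwitz :: "real^'n^'n \<Rightarrow> bool" where
  "hurwitz A \<longleftrightarrow> (\<forall>(lam::complex) (v::complex^'n). v \<noteq> 0 \<and> cmat A *v v = lam *s v \<longrightarrow> Re lam < 0)"

definition resolvent :: "real^'n^'n \<Rightarrow> complex \<Rightarrow> complex^'n^'n" where
  "resolvent A s = matrix_inv (mat s - cmat A)"

definition tf1 :: "real^'n^'n \<Rightarrow> real^'m^'n \<Rightarrow> real^'n^'p \<Rightarrow> complex \<Rightarrow> complex^'m^'p" where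
  "tf1 A B C s = cmat C ** resolvent A s ** cmat B"

definition tf2 :: "real^'n^'n \<Rightarrow> real^'m^'n \<Rightarrow> ('p \<Rightarrow> real^'n^'n) \<Rightarrow> 'p \<Rightarrow> complex \<Rightarrow> complex \<Rightarrow> complex^'m^'m" where
  "tf2 A B M i s1 s2 = transpose (cmat B) ** ctrans (resolvent A s1) ** cmat (M i) ** resolvent A s2 ** cmat B"

definition h2w_norm_sq :: "real \<Rightarrow> (complex \<Rightarrow> complex^'m^'p)
    \<Rightarrow> ('p::finite \<Rightarrow> complex \<Rightarrow> complex \<Rightarrow> complex^'m^'m) \<Rightarrow> complex" where
  "h2w_norm_sq w H1 H2 = trace (
     (1 / (2*pi)) *\<^sub>R integral {-w..w} (\<lambda>\<nu>. ctrans (H1 (\<i> * of_real \<nu>)) ** H1 (\<i> * of_real \<nu>))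
   + (1 / (2*pi)^2) *\<^sub>R integral {-w..w} (\<lambda>\<nu>1. integral {-w..w} (\<lambda>\<nu>2.
        \<Sum>i\<in>UNIV. ctrans (H2 i (\<i> * of_real \<nu>1) (\<i> * of_real \<nu>2)) ** H2 i (\<i> * of_real \<nu>1) (\<i> * of_real \<nu>2))))"

definition h2w_inner :: "real \<Rightarrow> (complex \<Rightarrow> complex^'m^'p)
    \<Rightarrow> ('p::finite \<Rightarrow> complex \<Rightarrow> complex \<Rightarrow> complex^'m^'m)
    \<Rightarrow> (complex \<Rightarrow> complex^'m^'p)
    \<Rightarrow> ('p \<Rightarrow> complex \<Rightarrow> complex \<Rightarrow> complex^'m^'m) \<Rightarrow> complex" where
  "h2w_inner w H1 H2 K1 K2 =
     (1 / (2*pi)) * integral {-w..w} (\<lambda>\<nu>. trace (ctrans (H1 (\<i> * of_real \<nu>)) ** K1 (\<i> * of_real \<nu>)))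
   + (1 / (4*pi^2)) * trace (integral {-w..w} (\<lambda>\<nu>1. integral {-w..w} (\<lambda>\<nu>2.
        \<Sum>i\<in>UNIV. ctrans (H2 i (\<i> * of_real \<nu>1) (\<i> * of_real \<nu>2)) ** K2 i (\<i> * of_real \<nu>1) (\<i> * of_real \<nu>2))))"

definition Fw :: "real \<Rightarrow> real^'n^'n \<Rightarrow> complex^'n^'n" where
  "Fw w A = (1 / (2*pi)) *\<^sub>R integral {-w..w} (\<lambda>\<nu>. resolvent A (\<i> * of_real \<nu>))"

end

(*
  The realizations are real, so both transfer functions satisfy G(-j\<nu>) = conj G(j\<nu>) and are
  continuous on the imaginary axis. Hence the H2,\<omega> inner product is a Hermitian sesquilinear form
  whose value <G,G_k> is real, and expanding the norm of G - G_k gives the first identity.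

  For the inner product, the realizations turn the integrands into B^T (...) B_k, leaving the
  frequency integrals (1/2\<pi>) \<integral> (j\<nu>I-A)^-* X (j\<nu>I-A_k)^-1 d\<nu> and
  (1/2\<pi>) \<integral> (j\<nu>I-A)^-1 X (j\<nu>I-A_k)^-* d\<nu>. Multiplying the resolvent identity
  A (j\<nu>I-A)^-1 = j\<nu> (j\<nu>I-A)^-1 - I by the remaining factors shows that they solve Sylvester
  equations whose constant terms involve F_\<omega> and F_k,\<omega>. As A and A_k are Hurwitz, A^T and -A_k
  have disjoint spectra, so these Sylvester equations have unique solutions: the integrals are
  exactly Y12, Z12 and P12.
*)

theory Submission
  imports Defs "HOL-Computational_Algebra.Fundamental_Theorem_Algebra"
begin

lemma matrix_add_rdistrib: "((A::'a::semiring_1^'n^'m) + B) ** C = A ** C + B ** C"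
  by (simp add: matrix_matrix_mult_def vec_eq_iff distrib_right sum.distrib)

lemma matrix_diff_ldistrib: "(A::'a::ring_1^'n^'m) ** (B - C) = A ** B - A ** C"
  by (simp add: matrix_matrix_mult_def vec_eq_iff right_diff_distrib sum_subtractf)

lemma matrix_diff_rdistrib: "((A::'a::ring_1^'n^'m) - B) ** C = A ** C - B ** C"
  by (simp add: matrix_matrix_mult_def vec_eq_iff left_diff_distrib sum_subtractf)

lemma matrix_neg_left: "(- (A::'a::ring_1^'n^'m)) ** B = - (A ** B)"
  by (simp add: matrix_matrix_mult_def vec_eq_iff sum_negf)

lemma matrix_neg_right: "(A::'a::ring_1^'n^'m) ** (- B) = - (A ** B)"
  by (simp add: matrix_matrix_mult_def vec_eq_iff sum_negf)

lemma invertible_uminus: "invertible (- (X::'a::ring_1^'n^'n)) \<longleftrightarrow> invertible X"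
  unfolding invertible_def by (metis matrix_neg_left matrix_neg_right minus_minus)

lemma matrix_sum_left: "(A::'a::semiring_1^'n^'m) ** sum f S = (\<Sum>i\<in>S. A ** f i)"
  by (induct S rule: infinite_finite_induct) (auto simp: matrix_add_ldistrib)

lemma matrix_sum_right: "sum f S ** (A::'a::semiring_1^'n^'m) = (\<Sum>i\<in>S. f i ** A)"
  by (induct S rule: infinite_finite_induct) (auto simp: matrix_add_rdistrib)

lemma mat_matrix_mult: "mat (c::'a::semiring_1) ** A = (\<chi> i j. c * A$i$j)"
  by (simp add: matrix_matrix_mult_def vec_eq_iff mat_def if_distrib[where f="\<lambda>x. x * _"] cong: if_cong)

lemma matrix_mat_mult: "A ** mat (c::'a::semiring_1) = (\<chi> i j. A$i$j * c)"
  by (simp add: matrix_matrix_mult_def vec_eq_iff mat_def if_distrib[where f="\<lambda>x. _ * x"] cong: if_cong)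

lemma mat_matrix_mult_commute: "mat (c::'a::comm_semiring_1) ** A = A ** mat c"
  by (simp add: mat_matrix_mult matrix_mat_mult mult.commute)

lemma mat_matrix_mult_left_commute: "mat (c::'a::comm_semiring_1) ** (A ** B) = A ** (mat c ** B)"
  by (metis matrix_mul_assoc mat_matrix_mult_commute)

lemma mat_add: "mat (a + b) = (mat a + mat b :: 'a::monoid_add^'n^'n)"
  by (simp add: mat_def vec_eq_iff)

lemma mat_neg: "mat (- a) = (- mat a :: 'a::group_add^'n^'n)"
  by (simp add: mat_def vec_eq_iff)

lemma mat_mult_mat: "mat a ** mat b = (mat (a * b) :: 'a::semiring_1^'n^'n)"
  by (simp add: mat_matrix_mult vec_eq_iff) (simp add: mat_def)

lemma mat_of_real_matrix_mult: "mat (of_real r) ** A = r *\<^sub>R (A::'a::real_algebra_1^'n^'m)"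
  by (simp add: mat_matrix_mult vec_eq_iff) (simp add: scaleR_conv_of_real)

lemma mat_matrix_vector_mult: "mat c *v v = c *s (v::'a::semiring_1^'n)"
  by (simp add: matrix_vector_mult_def mat_def vec_eq_iff if_distrib[where f="\<lambda>x. x * _"] cong: if_cong)

lemma transpose_diff: "transpose (A - B) = transpose A - transpose (B::'a::ab_group_add^'n^'m)"
  by (simp add: transpose_def vec_eq_iff)

lemma trace_scaleR: "trace (c *\<^sub>R (X::'a::real_algebra_1^'n^'n)) = c *\<^sub>R trace X"
  by (simp add: trace_def scaleR_sum_right)

abbreviation conj_matrix :: "complex^'n^'m \<Rightarrow> complex^'n^'m" where
  "conj_matrix X \<equiv> map_matrix cnj X"

lemma ctrans_mult: "ctrans (A ** B) = ctrans B ** ctrans A"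
  by (simp add: ctrans_def matrix_matrix_mult_def transpose_def vec_eq_iff mult.commute)

lemma ctrans_ctrans [simp]: "ctrans (ctrans A) = A"
  by (simp add: ctrans_def transpose_def vec_eq_iff)

lemma ctrans_add: "ctrans (A + B) = ctrans A + ctrans B"
  by (simp add: ctrans_def transpose_def vec_eq_iff)

lemma ctrans_diff: "ctrans (A - B) = ctrans A - ctrans B"
  by (simp add: ctrans_def transpose_def vec_eq_iff)

lemma ctrans_scaleR: "ctrans (c *\<^sub>R A) = c *\<^sub>R ctrans A"
  by (simp add: ctrans_def transpose_def vec_eq_iff)

lemma ctrans_sum: "ctrans (sum f S) = (\<Sum>i\<in>S. ctrans (f i))"
  by (induct S rule: infinite_finite_induct) (auto simp: ctrans_add ctrans_def transpose_def vec_eq_iff)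

lemma ctrans_mat: "ctrans (mat c) = mat (cnj c)"
  by (simp add: ctrans_def transpose_def mat_def vec_eq_iff)

lemma ctrans_cmat: "ctrans (cmat X) = cmat (transpose X)"
  by (simp add: ctrans_def transpose_def cmat_def vec_eq_iff)

lemma transpose_cmat: "transpose (cmat X) = cmat (transpose X)"
  by (simp add: transpose_def cmat_def vec_eq_iff)

lemma trace_ctrans: "trace (ctrans A) = cnj (trace A)"
  by (simp add: ctrans_def transpose_def trace_def)

lemma conj_matrix_mult: "conj_matrix (X ** Y) = conj_matrix X ** conj_matrix Y"
  by (simp add: matrix_matrix_mult_def vec_eq_iff)

lemma conj_matrix_ctrans: "conj_matrix (ctrans X) = ctrans (conj_matrix X)"
  by (simp add: ctrans_def transpose_def vec_eq_iff)

lemma conj_matrix_transpose: "conj_matrix (transpose X) = transpose (conj_matrix X)"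
  by (simp add: vec_eq_iff transpose_def)

lemma conj_matrix_sum: "conj_matrix (sum f S) = (\<Sum>i\<in>S. conj_matrix (f i))"
  by (induct S rule: infinite_finite_induct) (auto simp: vec_eq_iff)

lemma conj_matrix_diff: "conj_matrix (X - Y) = conj_matrix X - conj_matrix Y"
  by (simp add: vec_eq_iff)

lemma conj_matrix_cmat: "conj_matrix (cmat X) = cmat X"
  by (simp add: vec_eq_iff cmat_def)

lemma conj_matrix_mat: "conj_matrix (mat c) = mat (cnj c)"
  by (simp add: vec_eq_iff mat_def)

lemma trace_conj_matrix: "trace (conj_matrix X) = cnj (trace X)"
  by (simp add: trace_def)

section \<open>Uniqueness of solutions of Sylvester equations\<close>

definition eigenvalue :: "'a::field^'n^'n \<Rightarrow> 'a \<Rightarrow> bool" where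
  "eigenvalue M c \<longleftrightarrow> (\<exists>v. v \<noteq> 0 \<and> M *v v = c *s v)"

definition hurwitz_complex :: "complex^'n^'n \<Rightarrow> bool" where
  "hurwitz_complex M \<longleftrightarrow> (\<forall>c. eigenvalue M c \<longrightarrow> Re c < 0)"

lemma hurwitz_iff_hurwitz_complex: "hurwitz A \<longleftrightarrow> hurwitz_complex (cmat A)"
  by (auto simp: hurwitz_def hurwitz_complex_def eigenvalue_def)

lemma eigenvalue_iff_singular: "eigenvalue M c \<longleftrightarrow> \<not> invertible (M - mat c)"
proof
  assume "eigenvalue M c"
  then obtain v where "v \<noteq> 0" "(M - mat c) *v v = 0"
    by (auto simp: eigenvalue_def matrix_vector_mult_diff_rdistrib mat_matrix_vector_mult)
  then show "\<not> invertible (M - mat c)"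
    by (metis inj_matrix_vector_mult injD matrix_vector_mult_0_right)
next
  assume "\<not> invertible (M - mat c)"
  then obtain v where "v \<noteq> 0" "(M - mat c) *v v = 0"
    unfolding invertible_left_inverse matrix_left_invertible_ker by blast
  then show "eigenvalue M c"
    by (auto simp: eigenvalue_def matrix_vector_mult_diff_rdistrib mat_matrix_vector_mult)
qed

lemma eigenvalue_transpose: "eigenvalue (transpose M) c \<longleftrightarrow> eigenvalue M c"
  by (metis eigenvalue_iff_singular invertible_det_nz det_transpose transpose_diff transpose_mat)

lemma eigenvalue_uminus: "eigenvalue (- M) c \<longleftrightarrow> eigenvalue M (- c)"
proof -
  have "- M - mat c = - (M - mat (- c))"
    by (simp add: mat_neg)
  then show ?thesis
    by (metis eigenvalue_iff_singular invertible_uminus)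
qed

lemma hurwitz_complex_transpose: "hurwitz_complex (transpose M) \<longleftrightarrow> hurwitz_complex M"
  by (simp add: hurwitz_complex_def eigenvalue_transpose)

lemma hurwitz_complex_invertible:
  "hurwitz_complex M \<Longrightarrow> 0 \<le> Re s \<Longrightarrow> invertible (mat s - M)"
  by (metis eigenvalue_iff_singular hurwitz_complex_def invertible_uminus minus_diff_eq not_le)

primrec matpow :: "'a::semiring_1^'n^'n \<Rightarrow> nat \<Rightarrow> 'a^'n^'n" where
  "matpow M 0 = mat 1"
| "matpow M (Suc k) = M ** matpow M k"

definition poly_matrix :: "'a::comm_ring_1 poly \<Rightarrow> 'a^'n^'n \<Rightarrow> 'a^'n^'n" where
  "poly_matrix p M = fold_coeffs (\<lambda>a X. mat a + M ** X) p 0"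

lemma poly_matrix_0 [simp]: "poly_matrix 0 M = 0"
  by (simp add: poly_matrix_def)

lemma poly_matrix_pCons [simp]: "poly_matrix (pCons a p) M = mat a + M ** poly_matrix p M"
  by (cases "p = 0 \<and> a = 0") (auto simp add: poly_matrix_def)

lemma poly_matrix_add: "poly_matrix (p + q) M = poly_matrix p M + poly_matrix q M"
  by (induct p q rule: poly_induct2) (simp_all add: mat_add matrix_add_ldistrib algebra_simps)

lemma poly_matrix_smult: "poly_matrix (smult c p) M = mat c ** poly_matrix p M"
  by (induct p rule: pCons_induct)
     (simp_all add: matrix_add_ldistrib mat_mult_mat mat_matrix_mult_left_commute)

lemma poly_matrix_diff: "poly_matrix (p - q) M = poly_matrix p M - poly_matrix q M"
proof -
  have "poly_matrix (- q) M = - poly_matrix q M"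
    using poly_matrix_smult[of "-1" q M] by (simp add: mat_neg matrix_neg_left)
  then show ?thesis
    using poly_matrix_add[of p "- q" M] by simp
qed

lemma poly_matrix_mult: "poly_matrix (p * q) M = poly_matrix p M ** poly_matrix q M"
  by (induct p rule: pCons_induct)
     (simp_all add: poly_matrix_add poly_matrix_smult matrix_add_rdistrib matrix_mul_assoc)

lemma poly_matrix_sum: "poly_matrix (sum f S) M = (\<Sum>i\<in>S. poly_matrix (f i) M)"
  by (induct S rule: infinite_finite_induct) (auto simp: poly_matrix_add)

lemma poly_matrix_monom: "poly_matrix (monom c n) M = mat c ** matpow M n"
proof (induct n)
  case 0
  then show ?case
    by (simp add: monom_0)
next
  case (Suc n)
  then show ?case
    by (simp add: monom_Suc mat_matrix_mult_left_commute)
qed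

lemma poly_matrix_linear: "poly_matrix [:-r, 1:] M = M - mat r"
  by (simp add: mat_neg)

lemma poly_matrix_intertwine:
  assumes "A ** X = X ** B"
  shows "poly_matrix p A ** X = X ** poly_matrix p B"
proof (induct p rule: pCons_induct)
  case (pCons a p)
  have "poly_matrix (pCons a p) A ** X = mat a ** X + A ** (poly_matrix p A ** X)"
    by (simp add: matrix_add_rdistrib matrix_mul_assoc)
  also have "\<dots> = X ** mat a + (X ** B) ** poly_matrix p B"
    using pCons assms by (simp add: matrix_mul_assoc mat_matrix_mult_commute[of a X])
  finally show ?case
    by (simp add: matrix_add_ldistrib matrix_mul_assoc)
qed simp

lemma exists_annihilating_poly:
  fixes B :: "complex^'k^'k"
  shows "\<exists>p. p \<noteq> 0 \<and> poly_matrix p B = 0"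
proof (cases "inj_on (matpow B) {..DIM(complex^'k^'k)}")
  case True
  define D where "D = DIM(complex^'k^'k)"
  define S where "S = matpow B ` {..D}"
  have "card S = D + 1"
    unfolding S_def using True by (simp add: card_image D_def)
  then have "\<not> independent S"
    using independent_bound[of S] unfolding D_def by auto
  then obtain u where u: "\<exists>v\<in>S. u v \<noteq> 0" "(\<Sum>v\<in>S. u v *\<^sub>R v) = 0"
    using dependent_finite[of S] unfolding S_def by blast
  define p where "p = (\<Sum>i\<le>D. monom (complex_of_real (u (matpow B i))) i)"
  have "poly_matrix p B = (\<Sum>i\<le>D. u (matpow B i) *\<^sub>R matpow B i)"
    unfolding p_def by (simp add: poly_matrix_sum poly_matrix_monom mat_of_real_matrix_mult)
  also have "\<dots> = 0"
    using u(2) True unfolding S_def by (simp add: sum.reindex D_def)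
  finally have "poly_matrix p B = 0" .
  moreover obtain i0 where "i0 \<le> D" "u (matpow B i0) \<noteq> 0"
    using u(1) unfolding S_def by auto
  then have "coeff p i0 \<noteq> 0"
    unfolding p_def by (simp add: coeff_sum)
  ultimately show ?thesis
    by (metis coeff_0)
next
  case False
  then obtain i j where ij: "i \<noteq> j" "matpow B i = matpow B j"
    unfolding inj_on_def by blast
  define p :: "complex poly" where "p = monom 1 i - monom 1 j"
  have "coeff p i = 1"
    using ij unfolding p_def by (simp add: coeff_monom)
  then have "p \<noteq> 0"
    by auto
  moreover have "poly_matrix p B = 0"
    unfolding p_def using ij by (simp add: poly_matrix_diff poly_matrix_monom)
  ultimately show ?thesis
    by blast
qed

text \<open>A nonzero annihilating polynomial of minimal degree has only eigenvalues as roots.\<close>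

lemma exists_annihilating_poly_eigenvalue_roots:
  fixes B :: "complex^'k^'k"
  obtains p where "p \<noteq> 0" "poly_matrix p B = 0" "\<And>r. poly p r = 0 \<Longrightarrow> eigenvalue B r"
proof -
  obtain p0 where "p0 \<noteq> 0 \<and> poly_matrix p0 B = 0"
    using exists_annihilating_poly by blast
  then obtain p where p: "p \<noteq> 0" "poly_matrix p B = 0"
    and minimal: "\<And>q. q \<noteq> 0 \<and> poly_matrix q B = 0 \<Longrightarrow> degree p \<le> degree q"
    using ex_has_least_nat[of "\<lambda>q. q \<noteq> 0 \<and> poly_matrix q B = 0" p0 degree] by blast
  have "eigenvalue B r" if "poly p r = 0" for r
  proof -
    have "[:-r, 1:] dvd p"
      using that by (simp add: poly_eq_0_iff_dvd)
    then obtain q where q: "p = [:-r, 1:] * q"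
      by (elim dvdE)
    with p(1) have "q \<noteq> 0"
      by auto
    then have "degree p = degree q + 1"
      unfolding q by (subst degree_mult_eq) auto
    then have "poly_matrix q B \<noteq> 0"
      using minimal[of q] \<open>q \<noteq> 0\<close> by auto
    then obtain x where x: "poly_matrix q B *v x \<noteq> 0"
      using matrix_eq[of "poly_matrix q B" 0] by auto
    have "(B - mat r) ** poly_matrix q B = 0"
      using p(2) unfolding q poly_matrix_mult poly_matrix_linear .
    then have "(B - mat r) *v (poly_matrix q B *v x) = 0"
      by (simp add: matrix_vector_mul_assoc)
    then have "B *v (poly_matrix q B *v x) = r *s (poly_matrix q B *v x)"
      by (simp add: matrix_vector_mult_diff_rdistrib mat_matrix_vector_mult)
    then show ?thesis
      using x unfolding eigenvalue_def by blast
  qed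
  with p show ?thesis
    by (rule that)
qed

lemma poly_matrix_invertible:
  fixes A :: "complex^'n^'n"
  assumes "q \<noteq> 0" and "\<And>r. poly q r = 0 \<Longrightarrow> \<not> eigenvalue A r"
  shows "invertible (poly_matrix q A)"
  using assms
proof (induct "degree q" arbitrary: q rule: less_induct)
  case less
  show ?case
  proof (cases "degree q = 0")
    case True
    then obtain c where "q = [:c:]" "c \<noteq> 0"
      using less.prems(1) by (metis degree_eq_zeroE pCons_0_0)
    moreover have "mat c ** mat (1/c) = (mat 1 :: complex^'n^'n)"
      "mat (1/c) ** mat c = (mat 1 :: complex^'n^'n)"
      using \<open>c \<noteq> 0\<close> by (simp_all add: mat_mult_mat)
    ultimately show ?thesis
      unfolding invertible_def by auto
  next
    case False
    then have "\<not> constant (poly q)"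
      by (simp add: constant_degree)
    then obtain r where r: "poly q r = 0"
      using fundamental_theorem_of_algebra by blast
    then have "[:-r, 1:] dvd q"
      by (simp add: poly_eq_0_iff_dvd)
    then obtain q' where q': "q = [:-r, 1:] * q'"
      by (elim dvdE)
    with less.prems(1) have "q' \<noteq> 0"
      by auto
    then have "degree q = degree q' + 1"
      unfolding q' by (subst degree_mult_eq) auto
    moreover have "\<not> eigenvalue A z" if "poly q' z = 0" for z
      using less.prems(2)[of z] that q' by simp
    ultimately have "invertible (poly_matrix q' A)"
      using less.hyps[of q'] \<open>q' \<noteq> 0\<close> by simp
    moreover have "invertible (A - mat r)"
      using less.prems(2)[OF r] eigenvalue_iff_singular by blast
    ultimately show ?thesis
      unfolding q' poly_matrix_mult poly_matrix_linear by (rule invertible_mult[rotated])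
  qed
qed

text \<open>As \<open>-P\<close> and \<open>Q\<close> have no common eigenvalue, \<open>p(-P)\<close> is invertible for an annihilating
  polynomial \<open>p\<close> of \<open>Q\<close> whose roots are eigenvalues of \<open>Q\<close>, while \<open>p(-P) X = X p(Q) = 0\<close>.\<close>

lemma sylvester_homogeneous_unique:
  fixes P :: "complex^'n^'n" and Q :: "complex^'k^'k" and X :: "complex^'k^'n"
  assumes "hurwitz_complex P" "hurwitz_complex Q" and "P ** X + X ** Q = 0"
  shows "X = 0"
proof -
  obtain p where p: "p \<noteq> 0" "poly_matrix p Q = 0" and roots: "\<And>r. poly p r = 0 \<Longrightarrow> eigenvalue Q r"
    using exists_annihilating_poly_eigenvalue_roots[of Q] by blast
  have "\<not> eigenvalue (- P) r" if "poly p r = 0" for r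
    using roots[OF that] assms(1,2) unfolding hurwitz_complex_def eigenvalue_uminus by force
  then have "invertible (poly_matrix p (- P))"
    using poly_matrix_invertible p(1) by blast
  then obtain L where L: "L ** poly_matrix p (- P) = mat 1"
    unfolding invertible_def by blast
  have "(- P) ** X = X ** Q"
    using assms(3) by (simp add: matrix_neg_left add_eq_0_iff2)
  then have "poly_matrix p (- P) ** X = 0"
    using p(2) by (simp add: poly_matrix_intertwine)
  then have "L ** poly_matrix p (- P) ** X = 0"
    by (simp add: matrix_mul_assoc[symmetric])
  then show ?thesis
    using L by simp
qed

lemma sylvester_unique:
  fixes P :: "complex^'n^'n" and Q :: "complex^'k^'k" and X Y :: "complex^'k^'n"
  assumes "hurwitz_complex P" "hurwitz_complex Q"
    and "P ** X + X ** Q + E = 0" and "P ** Y + Y ** Q + E = 0"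
  shows "X = Y"
proof -
  have "P ** (X - Y) + (X - Y) ** Q = (P ** X + X ** Q + E) - (P ** Y + Y ** Q + E)"
    unfolding matrix_diff_ldistrib matrix_diff_rdistrib by (simp add: algebra_simps)
  then have "X - Y = 0"
    using sylvester_homogeneous_unique[OF assms(1,2), of "X - Y"] assms(3,4) by simp
  then show ?thesis
    by simp
qed

section \<open>The resolvent on the imaginary axis\<close>

lemma matrix_inv_right: "invertible (X::'a::field^'n^'n) \<Longrightarrow> X ** matrix_inv X = mat 1"
  using someI_ex[of "\<lambda>Y. X ** Y = mat 1 \<and> Y ** X = mat 1"] unfolding invertible_def matrix_inv_def
  by blast

lemma matrix_inv_left: "invertible (X::'a::field^'n^'n) \<Longrightarrow> matrix_inv X ** X = mat 1"
  using someI_ex[of "\<lambda>Y. X ** Y = mat 1 \<and> Y ** X = mat 1"] unfolding invertible_def matrix_inv_def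
  by blast

lemma matrix_inv_unique:
  fixes X :: "'a::field^'n^'n"
  assumes "X ** Y = mat 1"
  shows "matrix_inv X = Y"
proof -
  have "invertible X"
    using assms matrix_left_right_inverse unfolding invertible_def by blast
  then have "matrix_inv X = (matrix_inv X ** X) ** Y"
    using assms by (simp add: matrix_mul_assoc[symmetric])
  then show ?thesis
    using matrix_inv_left[OF \<open>invertible X\<close>] by simp
qed

lemma matrix_inv_cramer:
  fixes X :: "'a::field^'n^'n"
  assumes "invertible X"
  shows "matrix_inv X $ i $ j = det (\<chi> a b. if b = i then (if a = j then 1 else 0) else X $ a $ b) / det X"
proof -
  let ?e = "\<chi> a. if a = j then 1 else (0::'a)"
  have "X *v column j (matrix_inv X) = column j (X ** matrix_inv X)"
    by (simp add: matrix_vector_mult_def matrix_matrix_mult_def column_def)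
  also have "\<dots> = ?e"
    using matrix_inv_right[OF assms] by (simp add: column_def mat_def vec_eq_iff)
  finally have "column j (matrix_inv X) = (\<chi> k. det (\<chi> a b. if b = k then ?e $ a else X $ a $ b) / det X)"
    using cramer[of X] assms invertible_det_nz by blast
  then show ?thesis
    by (simp add: column_def vec_eq_iff cong: if_cong)
qed

lemma continuous_on_det [continuous_intros]:
  fixes f :: "'a::topological_space \<Rightarrow> 'b::real_normed_field^'n^'n"
  assumes "continuous_on S f"
  shows "continuous_on S (\<lambda>t. det (f t))"
  unfolding det_def by (intro continuous_intros continuous_on_component assms)

lemma continuous_on_matrix_inv [continuous_intros]:
  fixes f :: "'a::topological_space \<Rightarrow> 'b::real_normed_field^'n^'n"
  assumes "continuous_on S f" and "\<And>t. t \<in> S \<Longrightarrow> invertible (f t)"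
  shows "continuous_on S (\<lambda>t. matrix_inv (f t))"
proof -
  have "continuous_on S (\<lambda>t. (\<chi> a b. if b = i then (if a = j then 1 else 0) else f t $ a $ b) $ a $ b)"
    for i j a b
    by (cases "b = i") (auto intro!: continuous_intros continuous_on_component assms)
  then have "continuous_on S (\<lambda>t. det (\<chi> a b. if b = i then (if a = j then 1 else 0) else f t $ a $ b) / det (f t))"
    for i j
    using assms by (intro continuous_intros continuous_on_vec_lambda) (auto simp: invertible_det_nz)
  then have "continuous_on S (\<lambda>t. \<chi> i j. matrix_inv (f t) $ i $ j)"
    using assms(2) by (intro continuous_on_vec_lambda) (simp cong: continuous_on_cong add: matrix_inv_cramer)
  then show ?thesis
    by simp
qed

abbreviation resolvent_iw :: "real^'n^'n \<Rightarrow> real \<Rightarrow> complex^'n^'n" where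
  "resolvent_iw A \<nu> \<equiv> resolvent A (\<i> * complex_of_real \<nu>)"

lemma invertible_imag_shift: "hurwitz A \<Longrightarrow> invertible (mat (\<i> * complex_of_real \<nu>) - cmat A)"
  by (simp add: hurwitz_iff_hurwitz_complex hurwitz_complex_invertible)

lemma resolvent_iw_right_inverse:
  "hurwitz A \<Longrightarrow> (mat (\<i> * complex_of_real \<nu>) - cmat A) ** resolvent_iw A \<nu> = mat 1"
  unfolding resolvent_def by (rule matrix_inv_right[OF invertible_imag_shift])

lemma resolvent_iw_left_inverse:
  "hurwitz A \<Longrightarrow> resolvent_iw A \<nu> ** (mat (\<i> * complex_of_real \<nu>) - cmat A) = mat 1"
  unfolding resolvent_def by (rule matrix_inv_left[OF invertible_imag_shift])

lemma cmat_resolvent_iw: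
  "hurwitz A \<Longrightarrow> cmat A ** resolvent_iw A \<nu> = mat (\<i> * complex_of_real \<nu>) ** resolvent_iw A \<nu> - mat 1"
  using resolvent_iw_right_inverse[of A \<nu>] by (simp add: matrix_diff_rdistrib algebra_simps)

lemma resolvent_iw_cmat:
  "hurwitz A \<Longrightarrow> resolvent_iw A \<nu> ** cmat A = mat (\<i> * complex_of_real \<nu>) ** resolvent_iw A \<nu> - mat 1"
  using resolvent_iw_left_inverse[of A \<nu>]
  by (simp add: matrix_diff_ldistrib algebra_simps mat_matrix_mult_commute)

lemma resolvent_iw_uminus:
  assumes "hurwitz A"
  shows "resolvent_iw A (- \<nu>) = conj_matrix (resolvent_iw A \<nu>)"
proof -
  have "mat (\<i> * complex_of_real (- \<nu>)) - cmat A = conj_matrix (mat (\<i> * complex_of_real \<nu>) - cmat A)"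
    by (simp add: conj_matrix_diff conj_matrix_mat conj_matrix_cmat)
  then have "(mat (\<i> * complex_of_real (- \<nu>)) - cmat A) ** conj_matrix (resolvent_iw A \<nu>) = mat 1"
    using resolvent_iw_right_inverse[OF assms, of \<nu>]
    by (metis conj_matrix_mult conj_matrix_mat complex_cnj_one)
  then show ?thesis
    unfolding resolvent_def by (rule matrix_inv_unique)
qed

lemma continuous_on_mat [continuous_intros]:
  assumes "continuous_on S f"
  shows "continuous_on S (\<lambda>x. mat (f x) :: 'a::real_normed_vector^'n^'n)"
proof -
  have "continuous_on S (\<lambda>x. if i = j then f x else 0)" for i j :: 'n
    using assms by (cases "i = j") simp_all
  then show ?thesis
    unfolding mat_def by (intro continuous_on_vec_lambda)
qed

lemma continuous_on_resolvent_iw [continuous_intros]: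
  "hurwitz A \<Longrightarrow> continuous_on S f \<Longrightarrow> continuous_on S (\<lambda>x. resolvent_iw A (f x))"
  unfolding resolvent_def cmat_def
  by (intro continuous_intros invertible_imag_shift[unfolded cmat_def]) auto

lemma continuous_on_matrix_mult [continuous_intros]:
  fixes f :: "'a::topological_space \<Rightarrow> 'b::real_normed_algebra_1^'k^'m" and g :: "'a \<Rightarrow> 'b^'n^'k"
  assumes "continuous_on S f" "continuous_on S g"
  shows "continuous_on S (\<lambda>x. f x ** g x)"
  unfolding matrix_matrix_mult_def
  by (intro continuous_on_vec_lambda continuous_intros continuous_on_component assms)

lemma continuous_on_ctrans [continuous_intros]:
  "continuous_on S f \<Longrightarrow> continuous_on S (\<lambda>x. ctrans (f x))"
  unfolding ctrans_def transpose_def map_matrix_def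
  by (simp, intro continuous_on_vec_lambda continuous_on_cnj continuous_on_component)

lemma integrable_continuous_UNIV:
  "continuous_on UNIV f \<Longrightarrow> (f::real \<Rightarrow> 'a::banach) integrable_on {a..b}"
  by (rule integrable_continuous_real) (rule continuous_on_subset, auto)

lemma bounded_linear_matrix_mult_left: "bounded_linear (\<lambda>X. (L::complex^'k^'m) ** (X::complex^'n^'k))"
  unfolding linear_conv_bounded_linear[symmetric]
  by (rule linearI) (simp_all add: matrix_add_ldistrib matrix_scalar_ac scalar_matrix_assoc)

lemma bounded_linear_matrix_mult_right: "bounded_linear (\<lambda>X. (X::complex^'k^'m) ** (R::complex^'n^'k))"
  unfolding linear_conv_bounded_linear[symmetric]
  by (rule linearI) (simp_all add: matrix_add_rdistrib scalar_matrix_assoc)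

lemma bounded_linear_ctrans: "bounded_linear (ctrans :: complex^'k^'m \<Rightarrow> _)"
  unfolding linear_conv_bounded_linear[symmetric]
  by (rule linearI) (simp_all add: ctrans_add ctrans_scaleR)

lemma bounded_linear_conj_matrix: "bounded_linear (conj_matrix :: complex^'k^'m \<Rightarrow> _)"
  unfolding linear_conv_bounded_linear[symmetric]
  by (rule linearI) (simp_all add: vec_eq_iff)

lemma bounded_linear_trace: "bounded_linear (trace :: complex^'k^'k \<Rightarrow> complex)"
  unfolding linear_conv_bounded_linear[symmetric]
  by (rule linearI) (simp_all add: trace_add trace_scaleR)

lemma integral_matrix_mult_left:
  "f integrable_on S \<Longrightarrow> integral S (\<lambda>x. (L::complex^'k^'m) ** (f x::complex^'n^'k)) = L ** integral S f"
  using integral_linear[OF _ bounded_linear_matrix_mult_left, of f S L] by (simp add: o_def)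

lemma integral_matrix_mult_right:
  "f integrable_on S \<Longrightarrow> integral S (\<lambda>x. (f x::complex^'k^'m) ** (R::complex^'n^'k)) = integral S f ** R"
  using integral_linear[OF _ bounded_linear_matrix_mult_right, of f S R] by (simp add: o_def)

lemma integral_ctrans:
  "f integrable_on S \<Longrightarrow> integral S (\<lambda>x. ctrans (f x::complex^'k^'m)) = ctrans (integral S f)"
  using integral_linear[OF _ bounded_linear_ctrans, of f S] by (simp add: o_def)

lemma integral_conj_matrix:
  "f integrable_on S \<Longrightarrow> integral S (\<lambda>x. conj_matrix (f x::complex^'k^'m)) = conj_matrix (integral S f)"
  using integral_linear[OF _ bounded_linear_conj_matrix, of f S] by (simp add: o_def)

lemma integral_trace:
  "f integrable_on S \<Longrightarrow> integral S (\<lambda>x. trace (f x::complex^'k^'k)) = trace (integral S f)"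
  using integral_linear[OF _ bounded_linear_trace, of f S] by (simp add: o_def)

lemma integral_reflect_symmetric:
  "integral {-w..w} (\<lambda>x. f (- x)) = integral {-w..w} (f::real \<Rightarrow> 'a::euclidean_space)"
  using Henstock_Kurzweil_Integration.integral_reflect_real[of w "- w" f] by simp

lemma integrable_iterated_inner:
  fixes F :: "real \<Rightarrow> real \<Rightarrow> 'a::euclidean_space"
  assumes "continuous_on UNIV (\<lambda>x. F (fst x) (snd x))"
  shows "F a integrable_on {c..d}"
proof -
  have "continuous_on UNIV (\<lambda>y. (\<lambda>x. F (fst x) (snd x)) (a, y))"
    by (intro continuous_on_compose2[OF assms] continuous_intros) auto
  then show ?thesis
    by (intro integrable_continuous_UNIV) simp
qed

lemma integrable_iterated_outer:
  fixes F :: "real \<Rightarrow> real \<Rightarrow> 'a::euclidean_space"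
  assumes "continuous_on UNIV (\<lambda>x. F (fst x) (snd x))"
  shows "(\<lambda>a. integral {c..d} (F a)) integrable_on {c'..d'}"
proof -
  have "continuous_on (UNIV \<times> cbox c d) (\<lambda>(x, t). F x t)"
    using continuous_on_subset[OF assms] by (simp add: split_beta)
  then have "continuous_on UNIV (\<lambda>x. integral (cbox c d) (F x))"
    by (rule integral_continuous_on_param)
  then show ?thesis
    by (intro integrable_continuous_UNIV) simp
qed

lemma iterated_integral_bounded_linear:
  fixes F :: "real \<Rightarrow> real \<Rightarrow> 'a::euclidean_space"
  assumes "continuous_on UNIV (\<lambda>x. F (fst x) (snd x))" and "bounded_linear h"
  shows "integral {c'..d'} (\<lambda>a. integral {c..d} (\<lambda>b. h (F a b)))
       = h (integral {c'..d'} (\<lambda>a. integral {c..d} (F a)))"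
proof -
  have "integral {c..d} (\<lambda>b. h (F a b)) = h (integral {c..d} (F a))" for a
    using integral_linear[OF integrable_iterated_inner[OF assms(1)] assms(2)] by (simp add: o_def)
  then show ?thesis
    using integral_linear[OF integrable_iterated_outer[OF assms(1)] assms(2)] by (simp add: o_def)
qed

lemma iterated_integral_diff:
  fixes F G :: "real \<Rightarrow> real \<Rightarrow> 'a::euclidean_space"
  assumes "continuous_on UNIV (\<lambda>x. F (fst x) (snd x))" "continuous_on UNIV (\<lambda>x. G (fst x) (snd x))"
  shows "integral {c'..d'} (\<lambda>a. integral {c..d} (\<lambda>b. F a b - G a b))
       = integral {c'..d'} (\<lambda>a. integral {c..d} (F a)) - integral {c'..d'} (\<lambda>a. integral {c..d} (G a))"
  using integrable_iterated_inner[OF assms(1)] integrable_iterated_inner[OF assms(2)]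
    integrable_iterated_outer[OF assms(1)] integrable_iterated_outer[OF assms(2)]
  by (simp add: integral_diff)

section \<open>The frequency-limited inner product\<close>

definition iaxis_continuous :: "(complex \<Rightarrow> complex^'m^'p) \<Rightarrow> bool" where
  "iaxis_continuous H \<longleftrightarrow> continuous_on UNIV (\<lambda>\<nu>::real. H (\<i> * complex_of_real \<nu>))"

definition iaxis_continuous2 :: "('p \<Rightarrow> complex \<Rightarrow> complex \<Rightarrow> complex^'m^'m) \<Rightarrow> bool" where
  "iaxis_continuous2 H \<longleftrightarrow> (\<forall>i. continuous_on UNIV
     (\<lambda>x::real \<times> real. H i (\<i> * complex_of_real (fst x)) (\<i> * complex_of_real (snd x))))"

definition conj_symmetric :: "(complex \<Rightarrow> complex^'m^'p) \<Rightarrow> bool" where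
  "conj_symmetric H \<longleftrightarrow>
     (\<forall>\<nu>. H (\<i> * complex_of_real (- \<nu>)) = conj_matrix (H (\<i> * complex_of_real \<nu>)))"

definition conj_symmetric2 :: "('p \<Rightarrow> complex \<Rightarrow> complex \<Rightarrow> complex^'m^'m) \<Rightarrow> bool" where
  "conj_symmetric2 H \<longleftrightarrow> (\<forall>i a b. H i (\<i> * complex_of_real (- a)) (\<i> * complex_of_real (- b))
     = conj_matrix (H i (\<i> * complex_of_real a) (\<i> * complex_of_real b)))"

definition lin_kernel :: "(complex \<Rightarrow> complex^'m^'p) \<Rightarrow> (complex \<Rightarrow> complex^'m^'p) \<Rightarrow> real \<Rightarrow> complex^'m^'m"
  where "lin_kernel H K \<nu> = ctrans (H (\<i> * complex_of_real \<nu>)) ** K (\<i> * complex_of_real \<nu>)"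

definition quad_kernel :: "('p::finite \<Rightarrow> complex \<Rightarrow> complex \<Rightarrow> complex^'m^'m)
    \<Rightarrow> ('p \<Rightarrow> complex \<Rightarrow> complex \<Rightarrow> complex^'m^'m) \<Rightarrow> real \<Rightarrow> real \<Rightarrow> complex^'m^'m"
  where "quad_kernel H K a b = (\<Sum>i\<in>UNIV. ctrans (H i (\<i> * complex_of_real a) (\<i> * complex_of_real b))
      ** K i (\<i> * complex_of_real a) (\<i> * complex_of_real b))"

definition lin_pairing :: "real \<Rightarrow> (complex \<Rightarrow> complex^'m^'p) \<Rightarrow> (complex \<Rightarrow> complex^'m^'p) \<Rightarrow> complex^'m^'m"
  where "lin_pairing w H K = integral {-w..w} (lin_kernel H K)"

definition quad_pairing :: "real \<Rightarrow> ('p::finite \<Rightarrow> complex \<Rightarrow> complex \<Rightarrow> complex^'m^'m)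
    \<Rightarrow> ('p \<Rightarrow> complex \<Rightarrow> complex \<Rightarrow> complex^'m^'m) \<Rightarrow> complex^'m^'m"
  where "quad_pairing w H K = integral {-w..w} (\<lambda>a. integral {-w..w} (quad_kernel H K a))"

lemma continuous_on_lin_kernel:
  "iaxis_continuous H \<Longrightarrow> iaxis_continuous K \<Longrightarrow> continuous_on UNIV (lin_kernel H K)"
  unfolding iaxis_continuous_def lin_kernel_def by (intro continuous_intros)

lemma continuous_on_quad_kernel:
  "iaxis_continuous2 H \<Longrightarrow> iaxis_continuous2 K \<Longrightarrow>
    continuous_on UNIV (\<lambda>x. quad_kernel H K (fst x) (snd x))"
  unfolding iaxis_continuous2_def quad_kernel_def by (intro continuous_intros) auto

lemma lin_kernel_diff:
  "lin_kernel (\<lambda>s. G s - K s) (\<lambda>s. G s - K s) \<nu>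
    = (lin_kernel G G \<nu> - lin_kernel G K \<nu>) - (lin_kernel K G \<nu> - lin_kernel K K \<nu>)"
  unfolding lin_kernel_def by (simp add: ctrans_diff matrix_diff_ldistrib matrix_diff_rdistrib algebra_simps)

lemma quad_kernel_diff:
  "quad_kernel (\<lambda>i s1 s2. G i s1 s2 - K i s1 s2) (\<lambda>i s1 s2. G i s1 s2 - K i s1 s2) a b
    = (quad_kernel G G a b - quad_kernel G K a b) - (quad_kernel K G a b - quad_kernel K K a b)"
  unfolding quad_kernel_def
  by (simp add: ctrans_diff matrix_diff_ldistrib matrix_diff_rdistrib sum.distrib sum_subtractf algebra_simps)

lemma lin_pairing_diff:
  assumes "iaxis_continuous G" "iaxis_continuous K"
  shows "lin_pairing w (\<lambda>s. G s - K s) (\<lambda>s. G s - K s)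
    = lin_pairing w G G - lin_pairing w G K - lin_pairing w K G + lin_pairing w K K"
  using continuous_on_lin_kernel[OF assms(1,1), THEN integrable_continuous_UNIV]
    continuous_on_lin_kernel[OF assms(1,2), THEN integrable_continuous_UNIV]
    continuous_on_lin_kernel[OF assms(2,1), THEN integrable_continuous_UNIV]
    continuous_on_lin_kernel[OF assms(2,2), THEN integrable_continuous_UNIV]
  unfolding lin_pairing_def lin_kernel_diff by (simp add: integral_diff integrable_diff)

lemma quad_pairing_diff:
  assumes "iaxis_continuous2 G" "iaxis_continuous2 K"
  shows "quad_pairing w (\<lambda>i s1 s2. G i s1 s2 - K i s1 s2) (\<lambda>i s1 s2. G i s1 s2 - K i s1 s2)
    = quad_pairing w G G - quad_pairing w G K - quad_pairing w K G + quad_pairing w K K"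
  using assms
  unfolding quad_pairing_def quad_kernel_diff
  by (simp add: iterated_integral_diff continuous_on_quad_kernel continuous_on_diff)

lemma lin_pairing_swap:
  assumes "iaxis_continuous G" "iaxis_continuous K"
  shows "lin_pairing w K G = ctrans (lin_pairing w G K)"
proof -
  have "lin_kernel K G = (\<lambda>\<nu>. ctrans (lin_kernel G K \<nu>))"
    by (simp add: fun_eq_iff lin_kernel_def ctrans_mult)
  then show ?thesis
    unfolding lin_pairing_def
    using continuous_on_lin_kernel[OF assms, THEN integrable_continuous_UNIV] by (simp add: integral_ctrans)
qed

lemma quad_pairing_swap:
  assumes "iaxis_continuous2 G" "iaxis_continuous2 K"
  shows "quad_pairing w K G = ctrans (quad_pairing w G K)"
proof -
  have "quad_kernel K G a = (\<lambda>b. ctrans (quad_kernel G K a b))" for a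
    by (simp add: fun_eq_iff quad_kernel_def ctrans_sum ctrans_mult)
  then show ?thesis
    unfolding quad_pairing_def
    using iterated_integral_bounded_linear[OF continuous_on_quad_kernel[OF assms] bounded_linear_ctrans]
    by simp
qed

lemma lin_pairing_conj_matrix:
  assumes "iaxis_continuous G" "iaxis_continuous K" "conj_symmetric G" "conj_symmetric K"
  shows "conj_matrix (lin_pairing w G K) = lin_pairing w G K"
proof -
  have "conj_matrix (lin_kernel G K \<nu>) = lin_kernel G K (- \<nu>)" for \<nu>
    using assms(3,4) unfolding conj_symmetric_def lin_kernel_def
    by (simp add: conj_matrix_mult conj_matrix_ctrans)
  then have "conj_matrix (lin_pairing w G K) = integral {-w..w} (\<lambda>\<nu>. lin_kernel G K (- \<nu>))"
    unfolding lin_pairing_def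
    using continuous_on_lin_kernel[OF assms(1,2), THEN integrable_continuous_UNIV]
    by (simp add: integral_conj_matrix[symmetric])
  then show ?thesis
    unfolding integral_reflect_symmetric lin_pairing_def .
qed

lemma quad_pairing_conj_matrix:
  assumes "iaxis_continuous2 G" "iaxis_continuous2 K" "conj_symmetric2 G" "conj_symmetric2 K"
  shows "conj_matrix (quad_pairing w G K) = quad_pairing w G K"
proof -
  have "conj_matrix (quad_kernel G K a b) = quad_kernel G K (- a) (- b)" for a b
    using assms(3,4) unfolding conj_symmetric2_def quad_kernel_def
    by (simp add: conj_matrix_sum conj_matrix_mult conj_matrix_ctrans)
  then have "conj_matrix (quad_pairing w G K)
      = integral {-w..w} (\<lambda>a. integral {-w..w} (\<lambda>b. quad_kernel G K (- a) (- b)))"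
    unfolding quad_pairing_def
    using iterated_integral_bounded_linear[OF continuous_on_quad_kernel[OF assms(1,2)] bounded_linear_conj_matrix]
    by simp
  then show ?thesis
    unfolding integral_reflect_symmetric[of w "\<lambda>b. quad_kernel G K _ b"]
      integral_reflect_symmetric[of w "\<lambda>a. integral {-w..w} (quad_kernel G K a)"] quad_pairing_def .
qed

lemma h2w_inner_eq_pairings:
  assumes "iaxis_continuous H1" "iaxis_continuous K1"
  shows "h2w_inner w H1 H2 K1 K2
    = complex_of_real (1 / (2*pi)) * trace (lin_pairing w H1 K1)
      + complex_of_real (1 / (4*pi^2)) * trace (quad_pairing w H2 K2)"
  using continuous_on_lin_kernel[OF assms, THEN integrable_continuous_UNIV]
  unfolding h2w_inner_def lin_pairing_def quad_pairing_def quad_kernel_def lin_kernel_def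
  by (simp add: integral_trace)

lemma h2w_norm_sq_eq_inner:
  assumes "iaxis_continuous H1"
  shows "h2w_norm_sq w H1 H2 = h2w_inner w H1 H2 H1 H2"
  unfolding h2w_inner_eq_pairings[OF assms assms] h2w_norm_sq_def trace_add trace_scaleR
  unfolding lin_pairing_def quad_pairing_def quad_kernel_def lin_kernel_def
  by (simp add: scaleR_conv_of_real power2_eq_square)

lemma h2w_norm_sq_diff:
  assumes "iaxis_continuous G1" "iaxis_continuous K1" "iaxis_continuous2 G2" "iaxis_continuous2 K2"
  shows "h2w_norm_sq w (\<lambda>s. G1 s - K1 s) (\<lambda>i s1 s2. G2 i s1 s2 - K2 i s1 s2)
    = h2w_norm_sq w G1 G2 - h2w_inner w G1 G2 K1 K2 - h2w_inner w K1 K2 G1 G2 + h2w_norm_sq w K1 K2"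
proof -
  have "iaxis_continuous (\<lambda>s. G1 s - K1 s)"
    using assms(1,2) unfolding iaxis_continuous_def by (intro continuous_intros)
  then show ?thesis
    using assms
    by (simp add: h2w_norm_sq_eq_inner h2w_inner_eq_pairings lin_pairing_diff quad_pairing_diff
        trace_add trace_sub algebra_simps add_divide_distrib)
qed

lemma h2w_inner_swap:
  assumes "iaxis_continuous G1" "iaxis_continuous K1" "iaxis_continuous2 G2" "iaxis_continuous2 K2"
  shows "h2w_inner w K1 K2 G1 G2 = cnj (h2w_inner w G1 G2 K1 K2)"
  using assms
  by (simp add: h2w_inner_eq_pairings lin_pairing_swap[of G1 K1] quad_pairing_swap[of G2 K2] trace_ctrans)

lemma h2w_inner_real:
  assumes "iaxis_continuous G1" "iaxis_continuous K1" "iaxis_continuous2 G2" "iaxis_continuous2 K2"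
    and "conj_symmetric G1" "conj_symmetric K1" "conj_symmetric2 G2" "conj_symmetric2 K2"
  shows "cnj (h2w_inner w G1 G2 K1 K2) = h2w_inner w G1 G2 K1 K2"
proof -
  have "cnj (trace (lin_pairing w G1 K1)) = trace (lin_pairing w G1 K1)"
    "cnj (trace (quad_pairing w G2 K2)) = trace (quad_pairing w G2 K2)"
    using assms lin_pairing_conj_matrix quad_pairing_conj_matrix by (metis trace_conj_matrix)+
  then show ?thesis
    using assms(1,2) by (simp add: h2w_inner_eq_pairings)
qed

section \<open>Frequency-limited cross Gramians\<close>

text \<open>In the notation of the paper, \<open>Y\<^sub>1\<^sub>2\<^sub>,\<^sub>\<omega> = obs_gramian w A Ak (C\<^sup>T C\<^sub>k)\<close>,
  \<open>Z\<^sub>1\<^sub>2\<^sub>,\<^sub>\<omega> = obs_gramian w A Ak (\<Sum>\<^sub>i M\<^sub>i P\<^sub>1\<^sub>2\<^sub>,\<^sub>\<omega> M\<^sub>k\<^sub>,\<^sub>i)\<close> and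
  \<open>P\<^sub>1\<^sub>2\<^sub>,\<^sub>\<omega> = ctrb_gramian w A Ak (B B\<^sub>k\<^sup>T)\<close>.\<close>

definition obs_gramian :: "real \<Rightarrow> real^'n^'n \<Rightarrow> real^'k^'k \<Rightarrow> complex^'k^'n \<Rightarrow> complex^'k^'n" where
  "obs_gramian w A Ak X =
    (1 / (2*pi)) *\<^sub>R integral {-w..w} (\<lambda>\<nu>. ctrans (resolvent_iw A \<nu>) ** X ** resolvent_iw Ak \<nu>)"

definition ctrb_gramian :: "real \<Rightarrow> real^'n^'n \<Rightarrow> real^'k^'k \<Rightarrow> complex^'k^'n \<Rightarrow> complex^'k^'n" where
  "ctrb_gramian w A Ak X =
    (1 / (2*pi)) *\<^sub>R integral {-w..w} (\<lambda>\<nu>. resolvent_iw A \<nu> ** X ** ctrans (resolvent_iw Ak \<nu>))"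

lemma sylvester_integral:
  fixes U :: "real \<Rightarrow> complex^'n^'n" and V :: "real \<Rightarrow> complex^'k^'k" and X :: "complex^'k^'n"
  assumes "continuous_on UNIV U" "continuous_on UNIV V"
    and U: "\<And>\<nu>. P ** U \<nu> = mat (a \<nu>) ** U \<nu> - mat 1"
    and V: "\<And>\<nu>. V \<nu> ** Q = mat (b \<nu>) ** V \<nu> - mat 1"
    and "\<And>\<nu>. a \<nu> + b \<nu> = 0"
  shows "P ** integral {c..d} (\<lambda>\<nu>. U \<nu> ** X ** V \<nu>) + integral {c..d} (\<lambda>\<nu>. U \<nu> ** X ** V \<nu>) ** Q
    + integral {c..d} U ** X + X ** integral {c..d} V = 0"
proof -
  define W where "W \<nu> = U \<nu> ** X ** V \<nu>" for \<nu>
  have "P ** W \<nu> + W \<nu> ** Q = mat (a \<nu> + b \<nu>) ** W \<nu> - X ** V \<nu> - U \<nu> ** X" for \<nu>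
  proof -
    have "P ** W \<nu> + W \<nu> ** Q = (P ** U \<nu>) ** X ** V \<nu> + U \<nu> ** X ** (V \<nu> ** Q)"
      unfolding W_def by (simp add: matrix_mul_assoc)
    also have "\<dots> = mat (a \<nu>) ** W \<nu> + mat (b \<nu>) ** W \<nu> - X ** V \<nu> - U \<nu> ** X"
      unfolding U V W_def
      by (simp add: matrix_diff_ldistrib matrix_diff_rdistrib matrix_mul_assoc
          mat_matrix_mult_commute[of "b \<nu>" "U \<nu> ** X", symmetric])
    finally show ?thesis
      by (simp add: mat_add matrix_add_rdistrib)
  qed
  then have pointwise: "P ** W \<nu> + W \<nu> ** Q + U \<nu> ** X + X ** V \<nu> = 0" for \<nu>
    using assms(5) by simp
  have "continuous_on UNIV W"
    unfolding W_def using assms(1,2) by (intro continuous_intros)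
  then have "P ** integral {c..d} W + integral {c..d} W ** Q + integral {c..d} U ** X + X ** integral {c..d} V
      = integral {c..d} (\<lambda>\<nu>. P ** W \<nu> + W \<nu> ** Q + U \<nu> ** X + X ** V \<nu>)"
    using assms(1,2)
    by (simp add: integral_add integral_matrix_mult_left integral_matrix_mult_right integrable_add
        integrable_continuous_UNIV continuous_intros)
  also have "\<dots> = 0"
    unfolding pointwise by simp
  finally show ?thesis
    unfolding W_def .
qed

lemma transpose_cmat_ctrans_resolvent_iw:
  assumes "hurwitz A"
  shows "transpose (cmat A) ** ctrans (resolvent_iw A \<nu>)
    = mat (- \<i> * complex_of_real \<nu>) ** ctrans (resolvent_iw A \<nu>) - mat 1"
  using arg_cong[OF resolvent_iw_cmat[OF assms, of \<nu>], of ctrans]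
  by (simp add: ctrans_mult ctrans_diff ctrans_cmat transpose_cmat ctrans_mat mat_matrix_mult_commute)

lemma ctrans_resolvent_iw_transpose_cmat:
  assumes "hurwitz A"
  shows "ctrans (resolvent_iw A \<nu>) ** transpose (cmat A)
    = mat (- \<i> * complex_of_real \<nu>) ** ctrans (resolvent_iw A \<nu>) - mat 1"
  using arg_cong[OF cmat_resolvent_iw[OF assms, of \<nu>], of ctrans]
  by (simp add: ctrans_mult ctrans_diff ctrans_cmat transpose_cmat ctrans_mat mat_matrix_mult_commute)

lemma ctrans_Fw:
  "hurwitz A \<Longrightarrow> ctrans (Fw w A) = (1 / (2*pi)) *\<^sub>R integral {-w..w} (\<lambda>\<nu>. ctrans (resolvent_iw A \<nu>))"
  unfolding Fw_def ctrans_scaleR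
  by (simp add: integral_ctrans integrable_continuous_UNIV continuous_intros)

lemma scaled_sylvester:
  fixes P :: "complex^'n^'n" and Q :: "complex^'k^'k"
  assumes "P ** G + G ** Q + F ** X + X ** H = 0"
  shows "P ** (c *\<^sub>R G) + (c *\<^sub>R G) ** Q + (c *\<^sub>R F) ** X + X ** (c *\<^sub>R H) = 0"
proof -
  have "P ** (c *\<^sub>R G) + (c *\<^sub>R G) ** Q + (c *\<^sub>R F) ** X + X ** (c *\<^sub>R H)
      = c *\<^sub>R (P ** G + G ** Q + F ** X + X ** H)"
    by (simp add: matrix_scalar_ac scalar_matrix_assoc scaleR_right_distrib)
  then show ?thesis
    using assms by simp
qed

lemma obs_gramian_sylvester:
  assumes "hurwitz A" "hurwitz Ak"
  shows "transpose (cmat A) ** obs_gramian w A Ak X + obs_gramian w A Ak X ** cmat Ak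
    + ctrans (Fw w A) ** X + X ** Fw w Ak = 0"
  unfolding ctrans_Fw[OF assms(1)] unfolding obs_gramian_def Fw_def
  by (intro scaled_sylvester sylvester_integral[where a = "\<lambda>\<nu>. - \<i> * complex_of_real \<nu>"
        and b = "\<lambda>\<nu>. \<i> * complex_of_real \<nu>"] continuous_intros assms
        transpose_cmat_ctrans_resolvent_iw resolvent_iw_cmat) auto

lemma ctrb_gramian_sylvester:
  assumes "hurwitz A" "hurwitz Ak"
  shows "cmat A ** ctrb_gramian w A Ak X + ctrb_gramian w A Ak X ** transpose (cmat Ak)
    + Fw w A ** X + X ** ctrans (Fw w Ak) = 0"
  unfolding ctrans_Fw[OF assms(2)] unfolding ctrb_gramian_def Fw_def
  by (intro scaled_sylvester sylvester_integral[where a = "\<lambda>\<nu>. \<i> * complex_of_real \<nu>"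
        and b = "\<lambda>\<nu>. - \<i> * complex_of_real \<nu>"] continuous_intros assms
        cmat_resolvent_iw ctrans_resolvent_iw_transpose_cmat) auto

lemma obs_gramian_unique:
  assumes "hurwitz A" "hurwitz Ak"
    and "transpose (cmat A) ** Y + Y ** cmat Ak + ctrans (Fw w A) ** X + X ** Fw w Ak = 0"
  shows "Y = obs_gramian w A Ak X"
proof (rule sylvester_unique)
  show "hurwitz_complex (transpose (cmat A))" "hurwitz_complex (cmat Ak)"
    using assms(1,2) by (simp_all add: hurwitz_iff_hurwitz_complex hurwitz_complex_transpose)
  show "transpose (cmat A) ** Y + Y ** cmat Ak + (ctrans (Fw w A) ** X + X ** Fw w Ak) = 0"
    using assms(3) by (simp add: add.assoc)
  show "transpose (cmat A) ** obs_gramian w A Ak X + obs_gramian w A Ak X ** cmat Ak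
      + (ctrans (Fw w A) ** X + X ** Fw w Ak) = 0"
    using obs_gramian_sylvester[OF assms(1,2)] by (simp add: add.assoc)
qed

lemma ctrb_gramian_unique:
  assumes "hurwitz A" "hurwitz Ak"
    and "cmat A ** P + P ** transpose (cmat Ak) + Fw w A ** X + X ** ctrans (Fw w Ak) = 0"
  shows "P = ctrb_gramian w A Ak X"
proof (rule sylvester_unique)
  show "hurwitz_complex (cmat A)" "hurwitz_complex (transpose (cmat Ak))"
    using assms(1,2) by (simp_all add: hurwitz_iff_hurwitz_complex hurwitz_complex_transpose)
  show "cmat A ** P + P ** transpose (cmat Ak) + (Fw w A ** X + X ** ctrans (Fw w Ak)) = 0"
    using assms(3) by (simp add: add.assoc)
  show "cmat A ** ctrb_gramian w A Ak X + ctrb_gramian w A Ak X ** transpose (cmat Ak)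
      + (Fw w A ** X + X ** ctrans (Fw w Ak)) = 0"
    using ctrb_gramian_sylvester[OF assms(1,2)] by (simp add: add.assoc)
qed

lemma integrable_obs_gramian_integrand:
  "hurwitz A \<Longrightarrow> hurwitz Ak \<Longrightarrow>
    (\<lambda>\<nu>. ctrans (resolvent_iw A \<nu>) ** X ** resolvent_iw Ak \<nu>) integrable_on {a..b}"
  by (intro integrable_continuous_UNIV continuous_intros)

lemma bounded_linear_obs_gramian:
  assumes "hurwitz A" "hurwitz Ak"
  shows "bounded_linear (obs_gramian w A Ak)"
  unfolding linear_conv_bounded_linear[symmetric]
proof (rule linearI)
  show "obs_gramian w A Ak (X + X') = obs_gramian w A Ak X + obs_gramian w A Ak X'" for X X'
    unfolding obs_gramian_def
    using integrable_obs_gramian_integrand[OF assms, of X] integrable_obs_gramian_integrand[OF assms, of X']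
    by (simp add: matrix_add_ldistrib matrix_add_rdistrib integral_add scaleR_right_distrib)
  show "obs_gramian w A Ak (c *\<^sub>R X) = c *\<^sub>R obs_gramian w A Ak X" for c X
  proof -
    have "(\<lambda>\<nu>. ctrans (resolvent_iw A \<nu>) ** (c *\<^sub>R X) ** resolvent_iw Ak \<nu>)
        = (\<lambda>\<nu>. c *\<^sub>R (ctrans (resolvent_iw A \<nu>) ** X ** resolvent_iw Ak \<nu>))"
      by (simp add: matrix_scalar_ac scalar_matrix_assoc)
    then show ?thesis
      unfolding obs_gramian_def by (simp only: integral_cmul scaleR_scaleR mult.commute)
  qed
qed

definition quad_coupling :: "('p::finite \<Rightarrow> real^'n^'n) \<Rightarrow> ('p \<Rightarrow> real^'k^'k) \<Rightarrow> complex^'k^'n \<Rightarrow> complex^'k^'n"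
  where "quad_coupling M Mk X = (\<Sum>i\<in>UNIV. cmat (M i) ** X ** cmat (Mk i))"

lemma bounded_linear_quad_coupling: "bounded_linear (quad_coupling M Mk)"
  unfolding linear_conv_bounded_linear[symmetric]
  by (rule linearI) (simp_all add: quad_coupling_def matrix_add_ldistrib matrix_add_rdistrib sum.distrib
      scaleR_sum_right matrix_scalar_ac scalar_matrix_assoc)

section \<open>Transfer functions of LQO systems\<close>

lemma iaxis_continuous_tf1: "hurwitz A \<Longrightarrow> iaxis_continuous (tf1 A B C)"
  unfolding iaxis_continuous_def tf1_def by (intro continuous_intros)

lemma iaxis_continuous2_tf2: "hurwitz A \<Longrightarrow> iaxis_continuous2 (tf2 A B M)"
  unfolding iaxis_continuous2_def tf2_def by (intro allI continuous_intros)

lemma conj_symmetric_tf1: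
  assumes "hurwitz A"
  shows "conj_symmetric (tf1 A B C)"
  unfolding conj_symmetric_def tf1_def resolvent_iw_uminus[OF assms] conj_matrix_mult conj_matrix_cmat
  by simp

lemma conj_symmetric2_tf2:
  assumes "hurwitz A"
  shows "conj_symmetric2 (tf2 A B M)"
  unfolding conj_symmetric2_def tf2_def resolvent_iw_uminus[OF assms]
    conj_matrix_mult conj_matrix_cmat conj_matrix_ctrans conj_matrix_transpose
  by simp

lemma lin_pairing_tf1:
  assumes "hurwitz A" "hurwitz Ak"
  shows "lin_pairing w (tf1 A B C) (tf1 Ak Bk Ck)
    = (2*pi) *\<^sub>R (transpose (cmat B) ** obs_gramian w A Ak (transpose (cmat C) ** cmat Ck) ** cmat Bk)"
proof -
  have "lin_kernel (tf1 A B C) (tf1 Ak Bk Ck) = (\<lambda>\<nu>. transpose (cmat B)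
      ** (ctrans (resolvent_iw A \<nu>) ** (transpose (cmat C) ** cmat Ck) ** resolvent_iw Ak \<nu>) ** cmat Bk)"
    unfolding lin_kernel_def tf1_def
    by (simp add: fun_eq_iff ctrans_mult ctrans_cmat transpose_cmat matrix_mul_assoc)
  then show ?thesis
    unfolding lin_pairing_def obs_gramian_def
    using assms
    by (simp add: integral_matrix_mult_left integral_matrix_mult_right matrix_scalar_ac scalar_matrix_assoc
        integrable_continuous_UNIV continuous_intros)
qed

text \<open>The inner integral over \<open>\<nu>\<^sub>2\<close> produces an observability Gramian weighted by the coupling of
  \<open>(j\<nu>\<^sub>1 I - A)\<^sup>-\<^sup>1 B B\<^sub>k\<^sup>T (j\<nu>\<^sub>1 I - A\<^sub>k)\<^sup>-\<^sup>*\<close>, which is linear in that matrix;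
  the outer integral then produces the controllability Gramian.\<close>

lemma quad_pairing_tf2:
  assumes "hurwitz A" "hurwitz Ak" and symM: "\<And>i. transpose (M i) = M i"
  shows "quad_pairing w (tf2 A B M) (tf2 Ak Bk Mk) = (2*pi)^2 *\<^sub>R (transpose (cmat B)
    ** obs_gramian w A Ak (quad_coupling M Mk (ctrb_gramian w A Ak (cmat B ** transpose (cmat Bk))))
    ** cmat Bk)"
proof -
  define h where "h X = transpose (cmat B) ** obs_gramian w A Ak (quad_coupling M Mk X) ** cmat Bk" for X
  define XP where "XP \<nu> = resolvent_iw A \<nu> ** (cmat B ** transpose (cmat Bk)) ** ctrans (resolvent_iw Ak \<nu>)"
    for \<nu>
  have "bounded_linear h"
    unfolding h_def
    by (intro bounded_linear_compose[OF bounded_linear_matrix_mult_right]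
        bounded_linear_compose[OF bounded_linear_matrix_mult_left]
        bounded_linear_compose[OF bounded_linear_obs_gramian[OF assms(1,2)]] bounded_linear_quad_coupling)
  have "quad_kernel (tf2 A B M) (tf2 Ak Bk Mk) a = (\<lambda>b. transpose (cmat B)
      ** (ctrans (resolvent_iw A b) ** quad_coupling M Mk (XP a) ** resolvent_iw Ak b) ** cmat Bk)" for a
    unfolding quad_kernel_def tf2_def quad_coupling_def XP_def
    by (simp add: fun_eq_iff matrix_sum_left matrix_sum_right matrix_mul_assoc ctrans_mult ctrans_cmat
        transpose_cmat symM)
  then have "integral {-w..w} (quad_kernel (tf2 A B M) (tf2 Ak Bk Mk) a) = (2*pi) *\<^sub>R h (XP a)" for a
    unfolding h_def obs_gramian_def
    using assms(1,2)
    by (simp add: integral_matrix_mult_left integral_matrix_mult_right matrix_scalar_ac scalar_matrix_assoc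
        integrable_continuous_UNIV continuous_intros)
  moreover have "XP integrable_on {-w..w}"
    unfolding XP_def using assms(1,2) by (intro integrable_continuous_UNIV continuous_intros)
  ultimately have "quad_pairing w (tf2 A B M) (tf2 Ak Bk Mk) = (2*pi) *\<^sub>R h (integral {-w..w} XP)"
    unfolding quad_pairing_def
    using integral_linear[OF _ \<open>bounded_linear h\<close>] by (simp add: o_def)
  also have "integral {-w..w} XP = (2*pi) *\<^sub>R ctrb_gramian w A Ak (cmat B ** transpose (cmat Bk))"
    unfolding ctrb_gramian_def XP_def by simp
  finally show ?thesis
    unfolding h_def by (simp add: linear_simps(5)[OF \<open>bounded_linear h\<close>, unfolded h_def] power2_eq_square)
qed

lemma h2w_inner_tf:
  assumes "hurwitz A" "hurwitz Ak" and "\<And>i. transpose (M i) = M i"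
  shows "h2w_inner w (tf1 A B C) (tf2 A B M) (tf1 Ak Bk Ck) (tf2 Ak Bk Mk)
    = trace (transpose (cmat B) ** (obs_gramian w A Ak (transpose (cmat C) ** cmat Ck)
        + obs_gramian w A Ak (quad_coupling M Mk (ctrb_gramian w A Ak (cmat B ** transpose (cmat Bk)))))
      ** cmat Bk)"
  unfolding h2w_inner_eq_pairings[OF iaxis_continuous_tf1[OF assms(1)] iaxis_continuous_tf1[OF assms(2)]]
    lin_pairing_tf1[OF assms(1,2)] quad_pairing_tf2[OF assms] trace_scaleR
  by (simp add: scaleR_conv_of_real power2_eq_square matrix_add_ldistrib matrix_add_rdistrib trace_add)

theorem corollary1:
  fixes A :: "real^'n^'n" and B :: "real^'m^'n" and C :: "real^'n^'p"
    and M :: "'p \<Rightarrow> real^'n^'n"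
    and Ak :: "real^'k^'k" and Bk :: "real^'m^'k" and Ck :: "real^'k^'p"
    and Mk :: "'p \<Rightarrow> real^'k^'k"
    and w :: real
    and P12 Y12 Z12 Q12 :: "complex^'k^'n"
  assumes hA: "hurwitz A" and hAk: "hurwitz Ak"
    and symM: "\<And>i. transpose (M i) = M i"
    and symMk: "\<And>i. transpose (Mk i) = Mk i"
    and w_pos: "0 < w"
    and P12: "cmat A ** P12 + P12 ** transpose (cmat Ak)
              + Fw w A ** cmat B ** transpose (cmat Bk)
              + cmat B ** transpose (cmat Bk) ** ctrans (Fw w Ak) = 0"
    and Y12: "transpose (cmat A) ** Y12 + Y12 ** cmat Ak
              + ctrans (Fw w A) ** transpose (cmat C) ** cmat Ck
              + transpose (cmat C) ** cmat Ck ** Fw w Ak = 0"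
    and Z12: "transpose (cmat A) ** Z12 + Z12 ** cmat Ak
              + (\<Sum>i\<in>UNIV. ctrans (Fw w A) ** cmat (M i) ** P12 ** cmat (Mk i)
                           + cmat (M i) ** P12 ** cmat (Mk i) ** Fw w Ak) = 0"
    and Q12: "Q12 = Y12 + Z12"
  shows "h2w_norm_sq w (\<lambda>s. tf1 A B C s - tf1 Ak Bk Ck s)
                       (\<lambda>i s1 s2. tf2 A B M i s1 s2 - tf2 Ak Bk Mk i s1 s2)
         = h2w_norm_sq w (tf1 A B C) (tf2 A B M)
           - 2 * h2w_inner w (tf1 A B C) (tf2 A B M) (tf1 Ak Bk Ck) (tf2 Ak Bk Mk)
           + h2w_norm_sq w (tf1 Ak Bk Ck) (tf2 Ak Bk Mk)
       \<and> h2w_inner w (tf1 A B C) (tf2 A B M) (tf1 Ak Bk Ck) (tf2 Ak Bk Mk)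
           = trace (transpose (cmat B) ** (Y12 + Z12) ** cmat Bk)
       \<and> h2w_inner w (tf1 A B C) (tf2 A B M) (tf1 Ak Bk Ck) (tf2 Ak Bk Mk)
           = trace (transpose (cmat B) ** Q12 ** cmat Bk)"
proof -
  have P: "P12 = ctrb_gramian w A Ak (cmat B ** transpose (cmat Bk))"
    using ctrb_gramian_unique[OF hA hAk] P12 by (simp add: matrix_mul_assoc)
  have Y: "Y12 = obs_gramian w A Ak (transpose (cmat C) ** cmat Ck)"
    using obs_gramian_unique[OF hA hAk] Y12 by (simp add: matrix_mul_assoc)
  have Z: "Z12 = obs_gramian w A Ak (quad_coupling M Mk P12)"
    using obs_gramian_unique[OF hA hAk] Z12
    by (simp add: quad_coupling_def sum.distrib matrix_sum_left matrix_sum_right matrix_mul_assoc add.assoc)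
  have inner: "h2w_inner w (tf1 A B C) (tf2 A B M) (tf1 Ak Bk Ck) (tf2 Ak Bk Mk)
      = trace (transpose (cmat B) ** (Y12 + Z12) ** cmat Bk)"
    unfolding h2w_inner_tf[OF hA hAk symM] P Y Z ..
  note continuous = iaxis_continuous_tf1[OF hA] iaxis_continuous_tf1[OF hAk]
    iaxis_continuous2_tf2[OF hA] iaxis_continuous2_tf2[OF hAk]
  have "h2w_inner w (tf1 Ak Bk Ck) (tf2 Ak Bk Mk) (tf1 A B C) (tf2 A B M)
      = h2w_inner w (tf1 A B C) (tf2 A B M) (tf1 Ak Bk Ck) (tf2 Ak Bk Mk)"
    unfolding h2w_inner_swap[OF continuous]
    by (rule h2w_inner_real[OF continuous conj_symmetric_tf1[OF hA] conj_symmetric_tf1[OF hAk]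
          conj_symmetric2_tf2[OF hA] conj_symmetric2_tf2[OF hAk]])
  then show ?thesis
    using inner Q12 by (simp add: h2w_norm_sq_diff[OF continuous])
qed

end
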